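(* Let $(\mathcal A,\mathcal T,(-))$ be a meta-tangible $\mathcal T$-triple and let $a_1\neq a_2$ be elements of $\mathcal T$ with $a_1+a_2=a_2$. Then $a_1(-)a_2=(-)a_2$, equivalently $a_2(-)a_1=a_2$.
   Context: $(\mathcal A,+,\mathbb 0)$ commutative monoid, $\mathcal T\subseteq\mathcal A\setminus\{\mathbb 0\}$. A negation map is $(-):\mathcal A\to\mathcal A$ with $(-)(b_1+b_2)=(-)b_1+(-)b_2$, $(-)((-)b)=b$, $(-)\mathbb 0=\mathbb 0$, $(-)\mathcal T\subseteq\mathcal T$. Write $b(-)c:=b+((-)c)$, $b^\circ:=b(-)b$, $\mathcal A^\circ=\{b^\circ:b\in\mathcal A\}$. A $\mathcal T$-triple $(\mathcal A,\mathcal T,(-))$: such data with an action $\mathcal T\times\mathcal A\to\mathcal A$ satisfying $a(b_1+b_2)=ab_1+ab_2$, $a\mathbb 0=\mathbb 0$, $(-)(ab)=((-)a)b=a((-)b)$, with $\mathcal T\cap\mathcal A^\circ=\emptyset$ and every element of $\mathcal A$ a finite sum of elements of $\mathcal T$. The triple is meta-tangible if $a+b\in\mathcal T$ for all $a,b\in\mathcal T$ with $b\neq(-)a$. *)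

theory Defs
  imports Main
begin

text \<open>The ambient commutative monoid (A,+,0) is the type 'a (class comm_monoid_add).
  T is a subset, neg is the negation map, act is the action T x A -> A
  (only its values act a b with a in T are constrained).\<close>

definition neg_map :: "'a::comm_monoid_add set \<Rightarrow> ('a \<Rightarrow> 'a) \<Rightarrow> bool" where
  "neg_map T neg \<longleftrightarrow>
     (\<forall>b1 b2. neg (b1 + b2) = neg b1 + neg b2) \<and>
     (\<forall>b. neg (neg b) = b) \<and>
     neg 0 = 0 \<and>
     neg ` T \<subseteq> T"

definition circ_set :: "('a::comm_monoid_add \<Rightarrow> 'a) \<Rightarrow> 'a set" where
  "circ_set neg = {b + neg b | b. True}"

definition T_triple ::
  "'a::comm_monoid_add set \<Rightarrow> ('a \<Rightarrow> 'a) \<Rightarrow> ('a \<Rightarrow> 'a \<Rightarrow> 'a) \<Rightarrow> bool" where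
  "T_triple T neg act \<longleftrightarrow>
     T \<subseteq> UNIV - {0} \<and>
     neg_map T neg \<and>
     (\<forall>a\<in>T. \<forall>b1 b2. act a (b1 + b2) = act a b1 + act a b2) \<and>
     (\<forall>a\<in>T. act a 0 = 0) \<and>
     (\<forall>a\<in>T. \<forall>b. neg (act a b) = act (neg a) b \<and> act (neg a) b = act a (neg b)) \<and>
     T \<inter> circ_set neg = {} \<and>
     (\<forall>x. \<exists>xs. set xs \<subseteq> T \<and> x = sum_list xs)"

definition meta_tangible ::
  "'a::comm_monoid_add set \<Rightarrow> ('a \<Rightarrow> 'a) \<Rightarrow> ('a \<Rightarrow> 'a \<Rightarrow> 'a) \<Rightarrow> bool" where
  "meta_tangible T neg act \<longleftrightarrow>
     T_triple T neg act \<and> (\<forall>a\<in>T. \<forall>b\<in>T. b \<noteq> neg a \<longrightarrow> a + b \<in> T)"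

end

theory Submission
  imports Defs
begin

text \<open>Put c = a1 (-) a2. It is tangible, since (-)a2 \<noteq> (-)a1. Absorption gives
  c + a2 = a2 (-) a2, a quasi-zero and hence not tangible; by meta-tangibility this forces
  a2 = (-)c, i.e. c = (-)a2. Applying (-) to this identity yields a2 (-) a1 = a2.\<close>

lemma neg_map_add: "neg_map T neg \<Longrightarrow> neg (x + y) = neg x + neg y"
  unfolding neg_map_def by blast

lemma neg_map_neg_neg: "neg_map T neg \<Longrightarrow> neg (neg x) = x"
  unfolding neg_map_def by blast

lemma neg_map_neg_in: "neg_map T neg \<Longrightarrow> a \<in> T \<Longrightarrow> neg a \<in> T"
  unfolding neg_map_def by blast

lemma neg_map_neg_eq_iff: "neg_map T neg \<Longrightarrow> neg x = neg y \<longleftrightarrow> x = y"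
  by (metis neg_map_neg_neg)

lemma T_triple_neg_map: "T_triple T neg act \<Longrightarrow> neg_map T neg"
  unfolding T_triple_def by blast

lemma T_triple_quasi_zero_not_in: "T_triple T neg act \<Longrightarrow> b + neg b \<notin> T"
  unfolding T_triple_def circ_set_def by blast

lemma meta_tangible_T_triple: "meta_tangible T neg act \<Longrightarrow> T_triple T neg act"
  unfolding meta_tangible_def by blast

lemma meta_tangible_add_in:
  "meta_tangible T neg act \<Longrightarrow> a \<in> T \<Longrightarrow> b \<in> T \<Longrightarrow> b \<noteq> neg a \<Longrightarrow> a + b \<in> T"
  unfolding meta_tangible_def by blast

lemma meta_tangible_add_not_in_imp_neg:
  "meta_tangible T neg act \<Longrightarrow> a \<in> T \<Longrightarrow> b \<in> T \<Longrightarrow> a + b \<notin> T \<Longrightarrow> b = neg a"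
  using meta_tangible_add_in by blast

theorem lemma7p11:
  fixes T :: "'a::comm_monoid_add set" and neg :: "'a \<Rightarrow> 'a" and act :: "'a \<Rightarrow> 'a \<Rightarrow> 'a"
    and a1 a2 :: 'a
  assumes "meta_tangible T neg act"
    and "a1 \<in> T" and "a2 \<in> T" and "a1 \<noteq> a2"
    and "a1 + a2 = a2"
  shows "a1 + neg a2 = neg a2 \<and> a2 + neg a1 = a2"
proof -
  have tt: "T_triple T neg act" and nm: "neg_map T neg"
    using assms(1) meta_tangible_T_triple T_triple_neg_map by blast+
  note neg_add = neg_map_add[OF nm] and neg_neg = neg_map_neg_neg[OF nm]
  define c where "c = a1 + neg a2"
  have "neg a2 \<noteq> neg a1"
    using assms(4) neg_map_neg_eq_iff[OF nm] by simp
  then have c_in: "c \<in> T"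
    unfolding c_def by (rule meta_tangible_add_in[OF assms(1,2) neg_map_neg_in[OF nm assms(3)]])
  have "c + a2 = a2 + neg a2"
    unfolding c_def using assms(5) by (metis add.assoc add.commute)
  then have "c + a2 \<notin> T"
    using T_triple_quasi_zero_not_in[OF tt] by metis
  then have "a2 = neg c"
    by (rule meta_tangible_add_not_in_imp_neg[OF assms(1) c_in assms(3)])
  then have c_eq: "c = neg a2"
    using neg_neg by metis
  have "a2 + neg a1 = neg c"
    unfolding c_def neg_add neg_neg by (rule add.commute)
  also have "\<dots> = a2"
    using c_eq neg_neg by metis
  finally show ?thesis
    using c_eq unfolding c_def by simp
qed

end
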